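(* Let $a,b,c>0$ with $a,b\in(0,1)$, $a<c$ and $b<c$. Let $F(x)=F(a,b;c;x)$ and $F_1(x)=F(1-x)$ for $x\in(0,1)$. Then the function $f(x)=x(1-x)F(x)F_1(x)$ is increasing on $(0,1/2]$ and decreasing on $[1/2,1)$.
   Context: $F(a,b;c;x)=\sum_{n=0}^\infty\frac{(a,n)(b,n)}{(c,n)\,n!}x^n$ for $|x|<1$ is the Gaussian hypergeometric function, where $(a,0)=1$ and $(a,n)=a(a+1)\cdots(a+n-1)$ for $n\ge1$. *)

theory Defs
  imports "HOL-Analysis.Analysis"
begin

text \<open>Gaussian hypergeometric function F(a,b;c;x) for real parameters, as a power series
  (meaningful for |x| < 1). pochhammer a n is the rising factorial (a,n).\<close>
definition hypergeom :: "real \<Rightarrow> real \<Rightarrow> real \<Rightarrow> real \<Rightarrow> real" where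
  "hypergeom a b c x =
     (\<Sum>n. pochhammer a n * pochhammer b n / (pochhammer c n * fact n) * x ^ n)"

end

theory Submission
  imports Defs
begin

text \<open>
  Put \<open>u(x) = (1 - x) F(x)\<close>, so that \<open>f(x) = u(x) u(1 - x)\<close> and \<open>f(1 - x) = f(x)\<close>.
  Under the hypotheses the coefficients \<open>A\<^sub>n\<close> of \<open>F\<close> decrease strictly from \<open>A\<^sub>0 = 1\<close>, hence
  \<open>u(x) = 1 - \<Sum>\<^sub>n (A\<^sub>n - A\<^sub>n\<^sub>+\<^sub>1) x\<^sup>n\<^sup>+\<^sup>1\<close> is positive, concave and strictly decreasing on
  \<open>[0, 1)\<close>. For \<open>0 < x < y \<le> 1/2\<close> the points \<open>y\<close> and \<open>1 - y\<close> are the convex combinations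
  \<open>(1 - t) x + t (1 - x)\<close> and \<open>t x + (1 - t) (1 - x)\<close> of \<open>x\<close> and \<open>1 - x\<close>, so with
  \<open>p = u(x) > q = u(1 - x)\<close> concavity gives
  \<open>f(y) \<ge> ((1 - t) p + t q) (t p + (1 - t) q) = p q + t (1 - t) (p - q)\<^sup>2 > f(x)\<close>.
\<close>

lemma concave_on_eq:
  "\<lbrakk>concave_on S f; \<And>x. x \<in> S \<Longrightarrow> f x = g x\<rbrakk> \<Longrightarrow> concave_on S g"
  by (auto simp: concave_on_iff convexD)

lemma convex_on_power_nonneg: "convex_on {0::real..} (\<lambda>x. x ^ n)"
  using convex_power_even[of n] convex_power_odd[of n] convex_on_subset by (cases "even n") auto

lemma convex_on_suminf:
  fixes f :: "nat \<Rightarrow> 'a::real_vector \<Rightarrow> real"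
  assumes convex: "\<And>n. convex_on S (f n)"
    and summable: "\<And>x. x \<in> S \<Longrightarrow> summable (\<lambda>n. f n x)"
  shows "convex_on S (\<lambda>x. \<Sum>n. f n x)"
proof
  show "convex S"
    using convex convex_on_imp_convex by blast
  fix t x y
  assume t: "0 < (t::real)" "t < 1" and xy: "x \<in> S" "y \<in> S"
  have "(1 - t) *\<^sub>R x + t *\<^sub>R y \<in> S"
    using \<open>convex S\<close> xy t by (intro convexD) auto
  then have "(\<Sum>n. f n ((1 - t) *\<^sub>R x + t *\<^sub>R y)) \<le> (\<Sum>n. (1 - t) * f n x + t * f n y)"
    using convex_onD[OF convex] summable xy t
    by (intro suminf_le summable_add summable_mult) auto
  also have "\<dots> = (1 - t) * (\<Sum>n. f n x) + t * (\<Sum>n. f n y)"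
    using summable xy by (simp add: suminf_add[symmetric] suminf_mult summable_mult)
  finally show "(\<Sum>n. f n ((1 - t) *\<^sub>R x + t *\<^sub>R y)) \<le> (1 - t) * (\<Sum>n. f n x) + t * (\<Sum>n. f n y)" .
qed

lemma powser_one_minus_mult_sums:
  fixes A :: "nat \<Rightarrow> 'a::real_normed_field"
  assumes "summable (\<lambda>n. A n * x ^ n)"
  shows "(\<lambda>n. (A n - A (Suc n)) * x ^ Suc n) sums (A 0 - (1 - x) * (\<Sum>n. A n * x ^ n))"
proof -
  let ?P = "\<Sum>n. A n * x ^ n"
  have P: "(\<lambda>n. A n * x ^ n) sums ?P"
    using assms by (rule summable_sums)
  then have "(\<lambda>n. A (Suc n) * x ^ Suc n) sums (?P - A 0)"
    using sums_Suc_iff[of "\<lambda>n. A n * x ^ n"] by simp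
  from sums_diff[OF sums_mult[OF P, of x] this]
  show ?thesis
    by (simp add: algebra_simps)
qed

lemma summable_powser_decreasing_coeffs:
  fixes A :: "nat \<Rightarrow> real"
  assumes nonneg: "\<And>n. 0 \<le> A n" and decreasing: "\<And>n. A (Suc n) \<le> A n" and x: "\<bar>x\<bar> < 1"
  shows "summable (\<lambda>n. A n * x ^ n)"
proof (rule summable_comparison_test)
  have "A n \<le> A 0" for n
    using decseqD[of A 0 n] decseq_SucI[of A] decreasing by simp
  then show "\<exists>N. \<forall>n\<ge>N. norm (A n * x ^ n) \<le> A 0 * \<bar>x\<bar> ^ n"
    using nonneg by (auto simp: abs_mult power_abs intro!: mult_right_mono)
  show "summable (\<lambda>n. A 0 * \<bar>x\<bar> ^ n)"
    using x by (simp add: summable_geometric)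
qed

lemma concave_on_one_minus_mult_powser:
  fixes A :: "nat \<Rightarrow> real"
  assumes nonneg: "\<And>n. 0 \<le> A n" and decreasing: "\<And>n. A (Suc n) \<le> A n"
  shows "concave_on {0..<1} (\<lambda>x. (1 - x) * (\<Sum>n. A n * x ^ n))"
proof -
  let ?W = "\<lambda>x. \<Sum>n. (A n - A (Suc n)) * x ^ Suc n"
  have sums: "(\<lambda>n. (A n - A (Suc n)) * x ^ Suc n) sums (A 0 - (1 - x) * (\<Sum>n. A n * x ^ n))"
    if "x \<in> {0..<1}" for x
    using that by (intro powser_one_minus_mult_sums summable_powser_decreasing_coeffs nonneg decreasing) auto
  have "convex_on {0..<1} ?W"
  proof (rule convex_on_suminf)
    fix n
    have "convex_on {0..<1} (\<lambda>x. x ^ Suc n)"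
      by (rule convex_on_subset[OF convex_on_power_nonneg]) auto
    moreover have "0 \<le> A n - A (Suc n)"
      using decreasing[of n] by simp
    ultimately show "convex_on {0..<1} (\<lambda>x. (A n - A (Suc n)) * x ^ Suc n)"
      by (rule convex_on_cmul[rotated])
  qed (use sums sums_summable in blast)
  then have "concave_on {0..<1} (\<lambda>x. A 0 - ?W x)"
    by (intro concave_on_diff) (auto simp: concave_on_const)
  moreover have "A 0 - ?W x = (1 - x) * (\<Sum>n. A n * x ^ n)" if "x \<in> {0..<1}" for x
    using sums_unique[OF sums[OF that]] by simp
  ultimately show ?thesis
    by (rule concave_on_eq)
qed

lemma one_minus_mult_powser_strict_antimono:
  fixes A :: "nat \<Rightarrow> real"
  assumes nonneg: "\<And>n. 0 \<le> A n" and decreasing: "\<And>n. A (Suc n) \<le> A n"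
    and first_step: "A 1 < A 0"
    and xz: "0 \<le> x" "x < z" "z < 1"
  shows "(1 - z) * (\<Sum>n. A n * z ^ n) < (1 - x) * (\<Sum>n. A n * x ^ n)"
proof -
  have sums: "(\<lambda>n. (A n - A (Suc n)) * y ^ Suc n) sums (A 0 - (1 - y) * (\<Sum>n. A n * y ^ n))"
    if "0 \<le> y" "y < 1" for y
    using that by (intro powser_one_minus_mult_sums summable_powser_decreasing_coeffs nonneg decreasing) auto
  have "(\<lambda>n. (A n - A (Suc n)) * (z ^ Suc n - x ^ Suc n)) sums
      ((1 - x) * (\<Sum>n. A n * x ^ n) - (1 - z) * (\<Sum>n. A n * z ^ n))"
    using sums_diff[OF sums[of z] sums[of x]] xz by (simp add: algebra_simps)
  moreover have "0 < (\<Sum>n. (A n - A (Suc n)) * (z ^ Suc n - x ^ Suc n))"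
  proof (rule suminf_pos2[where i = 0])
    show "0 \<le> (A n - A (Suc n)) * (z ^ Suc n - x ^ Suc n)" for n
      using decreasing[of n] xz power_mono[of x z "Suc n"] by simp
  qed (use calculation sums_summable first_step xz in auto)
  ultimately show ?thesis
    using sums_unique by fastforce
qed

lemma one_minus_mult_powser_pos:
  fixes A :: "nat \<Rightarrow> real"
  assumes nonneg: "\<And>n. 0 \<le> A n" and decreasing: "\<And>n. A (Suc n) \<le> A n"
    and "0 < A 0" and x: "0 \<le> x" "x < 1"
  shows "0 < (1 - x) * (\<Sum>n. A n * x ^ n)"
proof -
  have "0 < (\<Sum>n. A n * x ^ n)"
    using assms by (intro suminf_pos2[where i = 0] summable_powser_decreasing_coeffs) auto
  with x show ?thesis
    by simp
qed

lemma concave_antimono_mult_reflect_strict_mono: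
  fixes u :: "real \<Rightarrow> real"
  assumes concave: "concave_on {0<..<1} u"
    and pos: "\<And>x. 0 < x \<Longrightarrow> x < 1 \<Longrightarrow> 0 < u x"
    and antimono: "\<And>x z. 0 < x \<Longrightarrow> x < z \<Longrightarrow> z < 1 \<Longrightarrow> u z < u x"
    and xy: "0 < x" "x < y" "y \<le> 1/2"
  shows "u x * u (1 - x) < u y * u (1 - y)"
proof -
  define t where "t = (y - x) / (1 - 2 * x)"
  have "0 < t" "t < 1"
    using xy by (auto simp: t_def)
  have "t * (1 - 2 * x) = y - x"
    using xy by (simp add: t_def)
  then have y: "y = (1 - t) * x + t * (1 - x)" and y': "1 - y = t * x + (1 - t) * (1 - x)"
    by (simp_all add: algebra_simps)
  define p where "p = u x"
  define q where "q = u (1 - x)"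
  have "0 < q" "q < p"
    using xy by (auto simp: p_def q_def intro: pos antimono)
  have lower: "(1 - t) * p + t * q \<le> u y"
    unfolding p_def q_def y using concave_onD[OF concave, of t x "1 - x"] \<open>0 < t\<close> \<open>t < 1\<close> xy
    by auto
  have lower': "t * p + (1 - t) * q \<le> u (1 - y)"
    unfolding p_def q_def y' using concave_onD[OF concave, of "1 - t" x "1 - x"] \<open>0 < t\<close> \<open>t < 1\<close> xy
    by auto
  have "((1 - t) * p + t * q) * (t * p + (1 - t) * q) = p * q + t * (1 - t) * (p - q)\<^sup>2"
    by (simp add: algebra_simps power2_eq_square)
  moreover have "0 < t * (1 - t) * (p - q)\<^sup>2"
    using \<open>0 < t\<close> \<open>t < 1\<close> \<open>q < p\<close> by simp
  ultimately have "p * q < ((1 - t) * p + t * q) * (t * p + (1 - t) * q)"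
    by simp
  also have "\<dots> \<le> u y * u (1 - y)"
    using lower lower' \<open>0 < t\<close> \<open>t < 1\<close> \<open>0 < q\<close> \<open>q < p\<close> pos[of y] xy
    by (intro mult_mono) auto
  finally show ?thesis
    by (simp add: p_def q_def)
qed

definition hypergeom_coeff :: "real \<Rightarrow> real \<Rightarrow> real \<Rightarrow> nat \<Rightarrow> real" where
  "hypergeom_coeff a b c n = pochhammer a n * pochhammer b n / (pochhammer c n * fact n)"

lemma hypergeom_eq_suminf_coeff: "hypergeom a b c x = (\<Sum>n. hypergeom_coeff a b c n * x ^ n)"
  by (simp add: hypergeom_def hypergeom_coeff_def)

lemma hypergeom_coeff_Suc:
  "hypergeom_coeff a b c (Suc n) =
     hypergeom_coeff a b c n * ((a + n) * (b + n) / ((c + n) * (n + 1)))"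
proof -
  have "hypergeom_coeff a b c (Suc n) =
      pochhammer a n * pochhammer b n * ((a + n) * (b + n)) / (pochhammer c n * fact n * ((c + n) * (n + 1)))"
    by (simp add: hypergeom_coeff_def pochhammer_Suc algebra_simps)
  then show ?thesis
    by (simp add: hypergeom_coeff_def times_divide_times_eq)
qed

lemma hypergeom_coeff_pos:
  "\<lbrakk>0 < a; 0 < b; 0 < c\<rbrakk> \<Longrightarrow> 0 < hypergeom_coeff a b c n"
  by (simp add: hypergeom_coeff_def pochhammer_pos)

lemma hypergeom_coeff_Suc_less:
  assumes "0 < a" "0 < b" "0 < c" "a * b < c" "a + b \<le> c + 1"
  shows "hypergeom_coeff a b c (Suc n) < hypergeom_coeff a b c n"
proof -
  have "(a + b) * n \<le> (c + 1) * n"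
    using assms by (intro mult_right_mono) auto
  then have "(a + n) * (b + n) < (c + n) * (n + 1)"
    using assms by (simp add: algebra_simps)
  then have "(a + n) * (b + n) / ((c + n) * (n + 1)) < 1"
    using assms by (simp add: divide_less_eq)
  from mult_strict_left_mono[OF this hypergeom_coeff_pos[OF assms(1-3)]] show ?thesis
    by (simp add: hypergeom_coeff_Suc)
qed

theorem theorem3p3:
  fixes a b c :: real
  assumes "0 < a" "a < 1" "0 < b" "b < 1" "0 < c" "a < c" "b < c"
  defines "f \<equiv> (\<lambda>x. x * (1 - x) * hypergeom a b c x * hypergeom a b c (1 - x))"
  shows "(\<forall>x\<in>{0<..1/2}. \<forall>y\<in>{0<..1/2}. x < y \<longrightarrow> f x < f y) \<and>
         (\<forall>x\<in>{1/2..<1}. \<forall>y\<in>{1/2..<1}. x < y \<longrightarrow> f y < f x)"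
proof -
  let ?A = "hypergeom_coeff a b c"
  define u where "u x = (1 - x) * (\<Sum>n. ?A n * x ^ n)" for x
  have "a * b < a * 1"
    using assms by (intro mult_strict_left_mono) auto
  then have "a * b < c"
    using assms by linarith
  then have nonneg: "0 \<le> ?A n" and decreasing: "?A (Suc n) \<le> ?A n" and "?A 1 < ?A 0" for n
    using assms hypergeom_coeff_pos hypergeom_coeff_Suc_less[of a b c]
    by (auto intro: less_imp_le)
  have "concave_on {0<..<1} u"
    using concave_on_one_minus_mult_powser[of ?A, OF nonneg decreasing]
    unfolding u_def concave_on_def by (rule convex_on_subset) auto
  moreover have "0 < u x" if "0 < x" "x < 1" for x
    unfolding u_def using that nonneg decreasing hypergeom_coeff_pos assms
    by (intro one_minus_mult_powser_pos) auto
  moreover have "u z < u x" if "0 < x" "x < z" "z < 1" for x z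
    unfolding u_def using that nonneg decreasing \<open>?A 1 < ?A 0\<close>
    by (intro one_minus_mult_powser_strict_antimono) auto
  ultimately have increasing: "f x < f y" if "0 < x" "x < y" "y \<le> 1/2" for x y
    using concave_antimono_mult_reflect_strict_mono[of u x y] that
    by (simp add: f_def u_def hypergeom_eq_suminf_coeff algebra_simps)
  have reflect: "f (1 - x) = f x" for x
    by (simp add: f_def)
  show ?thesis
  proof (intro conjI ballI impI)
    fix x y :: real
    assume "x \<in> {0<..1/2}" "y \<in> {0<..1/2}" "x < y"
    then show "f x < f y"
      using increasing by simp
  next
    fix x y :: real
    assume "x \<in> {1/2..<1}" "y \<in> {1/2..<1}" "x < y"
    then show "f y < f x"
      using increasing[of "1 - y" "1 - x"] reflect by simp
  qed
qed

end
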